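(* Let $P_1$ be the uniform distribution on $J_1=[0,\frac12]$, let $P_2$ be the uniform distribution on $J_2=[\frac34,1]$, and let $P=\frac34P_1+\frac14P_2$. For $n\ge 2$, let $\alpha_n$ be an optimal set of $n$-means for $P$. Then $\alpha_n\cap J_1\neq\emptyset$ and $\alpha_n\cap J_2\neq\emptyset$. Moreover, for $n\ge 2$, the Voronoi region (with respect to $\alpha_n$) of any point in $\alpha_n\cap J_1$ does not contain any point of $J_2$, and the Voronoi region of any point in $\alpha_n\cap J_2$ does not contain any point of $J_1$.
   Context: For a finite set $\alpha\subset\mathbb R$, $V(P;\alpha)=\int\min_{a\in\alpha}(x-a)^2\,dP(x)$; $V_n=\inf\{V(P;\alpha):\mathrm{card}(\alpha)\le n\}$; an optimal set of $n$-means is a set $\alpha$ with $\mathrm{card}(\alpha)\le n$ and $V(P;\alpha)=V_n$. The Voronoi region of $a\in\alpha$ is $\{x\in\mathbb R: |x-a|=\min_{b\in\alpha}|x-b|\}$. *)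

theory Defs
  imports "HOL-Analysis.Analysis"
begin

definition unif_dens :: "real \<Rightarrow> real \<Rightarrow> real \<Rightarrow> real" where
  "unif_dens a b x = indicator {a..b} x / (b - a)"

definition J1 :: "real set" where "J1 = {0..1/2}"
definition J2 :: "real set" where "J2 = {3/4..1}"

(* P = 3/4 P1 + 1/4 P2, with P1, P2 uniform on J1, J2; realized via the mixture density *)
definition P :: "real measure" where
  "P = density lborel (\<lambda>x. ennreal (3/4 * unif_dens 0 (1/2) x + 1/4 * unif_dens (3/4) 1 x))"

definition distortion :: "real measure \<Rightarrow> real set \<Rightarrow> real" where
  "distortion M \<alpha> = (\<integral>x. Min ((\<lambda>a. (x - a)^2) ` \<alpha>) \<partial>M)"

definition Vn :: "real measure \<Rightarrow> nat \<Rightarrow> real" where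
  "Vn M n = (INF \<alpha> \<in> {\<alpha>. finite \<alpha> \<and> \<alpha> \<noteq> {} \<and> card \<alpha> \<le> n}. distortion M \<alpha>)"

definition optimal_n_means :: "real measure \<Rightarrow> nat \<Rightarrow> real set \<Rightarrow> bool" where
  "optimal_n_means M n \<alpha> \<longleftrightarrow> finite \<alpha> \<and> \<alpha> \<noteq> {} \<and> card \<alpha> \<le> n \<and> distortion M \<alpha> = Vn M n"

definition voronoi :: "real set \<Rightarrow> real \<Rightarrow> real set" where
  "voronoi \<alpha> a = {x. \<bar>x - a\<bar> = Min ((\<lambda>b. \<bar>x - b\<bar>) ` \<alpha>)}"

end

theory Submission
  imports Defs
begin

(* An optimal set lies in [0, 1], since moving a point onto the support strictly lowers the
   distortion, and it has exactly n points. For n >= 3 the points 1/8, 3/8, 7/8 give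
   V_n <= 1/192. Each of the four conclusions, if it failed, would leave an open interval free
   of points of the optimal set -- (-1/2, 1/2), (3/4, 5/4), (1/2, 1) or (1/4, 3/4) -- next to
   a piece of J1 or J2 whose quantization error alone is then at least 1/192, and strictly more
   once the other interval is added.
   For n = 2 this margin is not available and the optimal set {a, b}, a < b, is computed: with
   the cell boundary frozen at m = (a + b) / 2 the distortion becomes a separable quadratic in
   the two points, so a and b are the centroids of their cells. These equations are
   inconsistent unless 1/2 <= m <= 3/4, where they give {1/4, 7/8}. *)

section \<open>Squared distance to a finite set of reals\<close>

lemma Min_power2_dist_eq_infdist:
  fixes A :: "real set"
  assumes "finite A" "A \<noteq> {}"
  shows "Min ((\<lambda>a. (x - a)\<^sup>2) ` A) = infdist x A ^ 2"
proof -
  obtain a where a: "a \<in> A" "infdist x A = dist x a"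
    using infdist_attains_inf[of A x] assms finite_imp_closed by blast
  have "(x - a)\<^sup>2 \<le> (x - b)\<^sup>2" if "b \<in> A" for b
    using infdist_le[OF that, of x] a by (simp add: dist_real_def abs_le_square_iff)
  then show ?thesis
    using a assms by (intro Min_eqI) (auto simp: dist_real_def)
qed

lemma infdist_pair: "infdist x {s, t} = min \<bar>x - s\<bar> \<bar>x - t\<bar>"
  for x s t :: real
  using infdist_Un_min[of "{s}" "{t}" x] by (simp add: dist_real_def insert_commute)

lemma infdist_pair_left:
  fixes x s t :: real
  assumes "s < t" "x \<le> (s + t) / 2"
  shows "infdist x {s, t} = \<bar>x - s\<bar>"
proof -
  have "\<bar>x - s\<bar> \<le> \<bar>x - t\<bar>"
    using assms by (auto simp: abs_if)
  then show ?thesis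
    by (simp add: infdist_pair min_def)
qed

lemma infdist_pair_right:
  fixes x s t :: real
  assumes "s < t" "(s + t) / 2 \<le> x"
  shows "infdist x {s, t} = \<bar>x - t\<bar>"
proof -
  have "\<bar>x - t\<bar> \<le> \<bar>x - s\<bar>"
    using assms by (auto simp: abs_if)
  then show ?thesis
    by (simp add: infdist_pair min_def)
qed

lemma infdist_ge_of_gap:
  fixes A :: "real set"
  assumes "A \<noteq> {}" "A \<inter> {c<..<d} = {}" "x \<in> {c..d}"
  shows "min (x - c) (d - x) \<le> infdist x A"
  unfolding infdist_notempty[OF assms(1)]
proof (rule cINF_greatest[OF assms(1)])
  fix a assume "a \<in> A"
  then have "a \<le> c \<or> d \<le> a" using assms(2) by fastforce
  then show "min (x - c) (d - x) \<le> dist x a"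
    using assms(3) by (auto simp: dist_real_def)
qed

lemma continuous_on_infdist_power2: "continuous_on S (\<lambda>x. infdist x A ^ 2)"
  by (intro continuous_intros)

lemma integrable_infdist_power2: "(\<lambda>x. infdist x A ^ 2) integrable_on {u..v}"
  for u v :: real
  by (intro integrable_continuous_interval continuous_on_infdist_power2)

section \<open>Integrals over intervals\<close>

lemma integral_power2_diff:
  fixes u v c :: real
  assumes "u \<le> v"
  shows "integral {u..v} (\<lambda>x. (x - c)\<^sup>2) = ((v - c) ^ 3 - (u - c) ^ 3) / 3"
proof -
  have "((\<lambda>x. (x - c)\<^sup>2) has_integral (v - c) ^ 3 / 3 - (u - c) ^ 3 / 3) {u..v}"
    by (rule fundamental_theorem_of_calculus[OF assms])
      (auto simp: has_real_derivative_iff_has_vector_derivative[symmetric]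
        intro!: derivative_eq_intros)
  then show ?thesis by (simp add: integral_unique diff_divide_distrib)
qed

lemma integral_less_if_less_at:
  fixes f g :: "real \<Rightarrow> real"
  assumes "continuous_on {u..v} f" "continuous_on {u..v} g" "u < v"
    and "\<And>x. x \<in> {u..v} \<Longrightarrow> f x \<le> g x" "x\<^sub>0 \<in> {u..v}" "f x\<^sub>0 < g x\<^sub>0"
  shows "integral {u..v} f < integral {u..v} g"
proof -
  have int: "f integrable_on {u..v}" "g integrable_on {u..v}"
    using assms(1,2) by (auto intro: integrable_continuous_interval)
  have "\<not> (\<forall>x\<in>{u..v}. g x - f x = 0)"
    using assms(5,6) by force
  then have "integral {u..v} (\<lambda>x. g x - f x) \<noteq> 0"
    using assms(1-4) by (subst integral_eq_0_iff) (auto intro!: continuous_intros)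
  moreover have "integral {u..v} f \<le> integral {u..v} g"
    using int assms(4) by (rule integral_le)
  ultimately show ?thesis
    using integral_diff[OF int(2,1)] by linarith
qed

lemma integral_infdist_power2_le:
  fixes A :: "real set"
  assumes "c \<in> A"
  shows "integral {u..v} (\<lambda>x. infdist x A ^ 2) \<le> integral {u..v} (\<lambda>x. (x - c)\<^sup>2)"
proof -
  have "infdist x A ^ 2 \<le> (x - c)\<^sup>2" for x
    using infdist_le[OF assms, of x] infdist_nonneg[of x A]
    by (simp add: dist_real_def abs_le_square_iff[symmetric])
  then show ?thesis
    by (intro integral_le integrable_infdist_power2 integrable_continuous_interval
        continuous_intros)
qed

lemma integral_infdist_power2_ge:
  fixes A :: "real set"
  assumes "\<And>x. x \<in> {u..v} \<Longrightarrow> \<bar>x - c\<bar> \<le> infdist x A"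
  shows "integral {u..v} (\<lambda>x. (x - c)\<^sup>2) \<le> integral {u..v} (\<lambda>x. infdist x A ^ 2)"
proof -
  have "(x - c)\<^sup>2 \<le> infdist x A ^ 2" if "x \<in> {u..v}" for x
    using assms[OF that] by (simp add: abs_le_square_iff[symmetric])
  then show ?thesis
    by (intro integral_le integrable_infdist_power2 integrable_continuous_interval
        continuous_intros)
qed

lemma integral_infdist_power2_pos:
  fixes A :: "real set"
  assumes "finite A" "A \<noteq> {}" "u < v"
  shows "0 < integral {u..v} (\<lambda>x. infdist x A ^ 2)"
proof -
  obtain x where x: "x \<in> {u..v}" "x \<notin> A"
    using assms(1) infinite_Icc[OF assms(3)] by (meson finite_subset subsetI)
  have "0 < infdist x A"
    using infdist_pos_not_in_closed[OF finite_imp_closed[OF assms(1)] assms(2) x(2)] .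
  then show ?thesis
    using integral_less_if_less_at[of u v "\<lambda>_. 0"] x assms(3)
    by (simp add: continuous_on_infdist_power2)
qed

lemma integral_infdist_power2_mono:
  fixes A B :: "real set"
  assumes "\<And>x. x \<in> {u..v} \<Longrightarrow> infdist x B \<le> infdist x A"
  shows "integral {u..v} (\<lambda>x. infdist x B ^ 2) \<le> integral {u..v} (\<lambda>x. infdist x A ^ 2)"
  using assms by (intro integral_le integrable_infdist_power2) (simp add: power_mono infdist_nonneg)

lemma integral_infdist_power2_strict_mono:
  fixes A B :: "real set"
  assumes "u < v" "\<And>x. x \<in> {u..v} \<Longrightarrow> infdist x B \<le> infdist x A"
    and "x\<^sub>0 \<in> {u..v}" "infdist x\<^sub>0 B < infdist x\<^sub>0 A"
  shows "integral {u..v} (\<lambda>x. infdist x B ^ 2) < integral {u..v} (\<lambda>x. infdist x A ^ 2)"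
proof (rule integral_less_if_less_at[OF continuous_on_infdist_power2 continuous_on_infdist_power2
      assms(1) _ assms(3)])
  show "infdist x B ^ 2 \<le> infdist x A ^ 2" if "x \<in> {u..v}" for x
    using assms(2)[OF that] by (simp add: power_mono infdist_nonneg)
  show "infdist x\<^sub>0 B ^ 2 < infdist x\<^sub>0 A ^ 2"
    using assms(4) by (simp add: power_strict_mono infdist_nonneg)
qed

lemma integral_infdist_pair_le:
  fixes s t u v w :: real
  assumes "u \<le> w" "w \<le> v"
  shows "integral {u..v} (\<lambda>x. infdist x {s, t} ^ 2)
    \<le> integral {u..w} (\<lambda>x. (x - s)\<^sup>2) + integral {w..v} (\<lambda>x. (x - t)\<^sup>2)"
  using Henstock_Kurzweil_Integration.integral_combine
      [OF assms integrable_infdist_power2[where A="{s, t}"]]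
    integral_infdist_power2_le[of s "{s, t}" u w] integral_infdist_power2_le[of t "{s, t}" w v]
  by simp

lemma integral_infdist_pair_eq:
  fixes s t u v :: real
  assumes "s < t" "u \<le> v"
  defines "w \<equiv> max u (min v ((s + t) / 2))"
  shows "integral {u..v} (\<lambda>x. infdist x {s, t} ^ 2)
    = integral {u..w} (\<lambda>x. (x - s)\<^sup>2) + integral {w..v} (\<lambda>x. (x - t)\<^sup>2)"
proof -
  have uwv: "u \<le> w" "w \<le> v"
    using assms(2) by (auto simp: w_def)
  have "integral {u..w} (\<lambda>x. infdist x {s, t} ^ 2) = integral {u..w} (\<lambda>x. (x - s)\<^sup>2)"
    by (rule integral_spike[of "{u, w}"])
      (use assms(1) in \<open>auto simp: w_def infdist_pair_left max_def min_def split: if_splits\<close>)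
  moreover have "integral {w..v} (\<lambda>x. infdist x {s, t} ^ 2) = integral {w..v} (\<lambda>x. (x - t)\<^sup>2)"
    by (rule integral_spike[of "{w, v}"])
      (use assms(1) in \<open>auto simp: w_def infdist_pair_right max_def min_def split: if_splits\<close>)
  ultimately show ?thesis
    using Henstock_Kurzweil_Integration.integral_combine
        [OF uwv integrable_infdist_power2[where A="{s, t}"]]
    by simp
qed

section \<open>Voronoi regions and optimal sets\<close>

lemma voronoi_dist_le:
  assumes "finite A" "x \<in> voronoi A a" "b \<in> A"
  shows "\<bar>x - a\<bar> \<le> \<bar>x - b\<bar>"
  using assms unfolding voronoi_def by (auto intro: Min_le)

lemma voronoi_pair:
  fixes a b :: real
  assumes "a < b"
  shows "voronoi {a, b} a = {..(a + b) / 2}" "voronoi {a, b} b = {(a + b) / 2..}"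
proof -
  have "voronoi {a, b} c = {x. \<bar>x - c\<bar> = min \<bar>x - a\<bar> \<bar>x - b\<bar>}" for c
    by (simp add: voronoi_def)
  then show "voronoi {a, b} a = {..(a + b) / 2}" "voronoi {a, b} b = {(a + b) / 2..}"
    using assms by (auto simp: min_def abs_if)
qed

lemma distortion_nonneg:
  assumes "finite A" "A \<noteq> {}"
  shows "0 \<le> distortion M A"
  unfolding distortion_def using assms
  by (intro Bochner_Integration.integral_nonneg) (simp add: Min_ge_iff)

lemma optimal_n_means_le:
  assumes "optimal_n_means M n A" "finite B" "B \<noteq> {}" "card B \<le> n"
  shows "distortion M A \<le> distortion M B"
proof -
  have "Vn M n \<le> distortion M B"
    unfolding Vn_def
    by (rule cINF_lower) (auto intro!: bdd_belowI[of _ 0] distortion_nonneg simp: assms(2-4))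
  then show ?thesis
    using assms(1) by (simp add: optimal_n_means_def)
qed

section \<open>The mixture P\<close>

lemma integral_P:
  fixes g :: "real \<Rightarrow> real"
  assumes "continuous_on UNIV g"
  shows "integral\<^sup>L P g = 3/2 * integral J1 g + integral J2 g"
proof -
  have ind: "integrable lborel (\<lambda>x. indicator S x *\<^sub>R g x)"
    "integral\<^sup>L lborel (\<lambda>x. indicator S x *\<^sub>R g x) = integral S g"
    if "S = {a..b}" for S and a b :: real
    using set_borel_integral_eq_integral[of S g] borel_integrable_compact[of S g]
      continuous_on_subset[OF assms, of S] that
    by (auto simp: set_integrable_def set_lebesgue_integral_def)
  have dens: "3/4 * unif_dens 0 (1/2) x + 1/4 * unif_dens (3/4) 1 x
      = 3/2 * indicator J1 x + indicator J2 x" for x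
    by (simp add: unif_dens_def J1_def J2_def)
  have "integral\<^sup>L P g = (\<integral>x. (3/2 * indicator J1 x + indicator J2 x) *\<^sub>R g x \<partial>lborel)"
    unfolding P_def dens
    by (intro integral_density) (auto simp: J1_def J2_def borel_measurable_continuous_onI[OF assms])
  also have "\<dots> = (\<integral>x. 3/2 * (indicator J1 x *\<^sub>R g x) + indicator J2 x *\<^sub>R g x \<partial>lborel)"
    by (simp add: algebra_simps)
  also have "\<dots> = 3/2 * integral J1 g + integral J2 g"
    using ind[of J1 0 "1/2"] ind[of J2 "3/4" 1] by (simp add: J1_def J2_def)
  finally show ?thesis .
qed

lemma distortion_P:
  assumes "finite A" "A \<noteq> {}"
  shows "distortion P A
    = 3/2 * integral J1 (\<lambda>x. infdist x A ^ 2) + integral J2 (\<lambda>x. infdist x A ^ 2)"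
  unfolding distortion_def Min_power2_dist_eq_infdist[OF assms]
  by (rule integral_P[OF continuous_on_infdist_power2])

lemma distortion_P_mono:
  assumes "finite A" "A \<noteq> {}" "finite B" "B \<noteq> {}"
    and closer: "\<And>x. x \<in> J1 \<union> J2 \<Longrightarrow> infdist x B \<le> infdist x A"
  shows "distortion P B \<le> distortion P A"
proof -
  have "integral J1 (\<lambda>x. infdist x B ^ 2) \<le> integral J1 (\<lambda>x. infdist x A ^ 2)"
    unfolding J1_def by (intro integral_infdist_power2_mono closer) (simp add: J1_def)
  moreover have "integral J2 (\<lambda>x. infdist x B ^ 2) \<le> integral J2 (\<lambda>x. infdist x A ^ 2)"
    unfolding J2_def by (intro integral_infdist_power2_mono closer) (simp add: J2_def)
  ultimately show ?thesis
    unfolding distortion_P[OF assms(1,2)] distortion_P[OF assms(3,4)] by linarith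
qed

lemma distortion_P_less:
  assumes "finite A" "A \<noteq> {}" "finite B" "B \<noteq> {}"
    and closer: "\<And>x. x \<in> J1 \<union> J2 \<Longrightarrow> infdist x B \<le> infdist x A"
    and "x\<^sub>0 \<in> J1 \<union> J2" "infdist x\<^sub>0 B < infdist x\<^sub>0 A"
  shows "distortion P B < distortion P A"
proof -
  have J1: "integral J1 (\<lambda>x. infdist x B ^ 2) \<le> integral J1 (\<lambda>x. infdist x A ^ 2)"
    and J1_less: "x\<^sub>0 \<in> J1 \<Longrightarrow> integral J1 (\<lambda>x. infdist x B ^ 2) < integral J1 (\<lambda>x. infdist x A ^ 2)"
    unfolding J1_def
    by (intro integral_infdist_power2_mono integral_infdist_power2_strict_mono closer assms(7);
        simp add: J1_def)+
  have J2: "integral J2 (\<lambda>x. infdist x B ^ 2) \<le> integral J2 (\<lambda>x. infdist x A ^ 2)"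
    and J2_less: "x\<^sub>0 \<in> J2 \<Longrightarrow> integral J2 (\<lambda>x. infdist x B ^ 2) < integral J2 (\<lambda>x. infdist x A ^ 2)"
    unfolding J2_def
    by (intro integral_infdist_power2_mono integral_infdist_power2_strict_mono closer assms(7);
        simp add: J2_def)+
  show ?thesis
    using assms(6) J1 J1_less J2 J2_less
    unfolding distortion_P[OF assms(1,2)] distortion_P[OF assms(3,4)] by auto
qed

lemma optimal_n_means_P_less:
  assumes "optimal_n_means P n A" "finite B" "B \<noteq> {}" "card B < n"
  shows "distortion P A < distortion P B"
proof -
  have "infinite J1"
    by (simp add: J1_def)
  then obtain p where p: "p \<in> J1" "p \<notin> B"
    using assms(2) by (meson finite_subset subsetI)
  have "distortion P (insert p B) < distortion P B"
  proof (rule distortion_P_less)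
    show "infdist x (insert p B) \<le> infdist x B" for x
      using assms(3) by (intro infdist_mono) auto
    show "infdist p (insert p B) < infdist p B"
      using infdist_pos_not_in_closed[OF finite_imp_closed[OF assms(2)] assms(3) p(2)] by simp
  qed (use assms(2,3) p in auto)
  moreover have "distortion P A \<le> distortion P (insert p B)"
    using assms by (intro optimal_n_means_le) (auto simp: card_insert_if)
  ultimately show ?thesis by simp
qed

lemma optimal_n_means_P_card:
  assumes "optimal_n_means P n A"
  shows "card A = n"
proof (rule ccontr)
  have A: "finite A" "A \<noteq> {}" "card A \<le> n"
    using assms by (auto simp: optimal_n_means_def)
  assume "card A \<noteq> n"
  then have "distortion P A < distortion P A"
    using optimal_n_means_P_less[OF assms A(1,2)] A(3) by simp
  then show False
    by simp
qed

lemma optimal_n_means_P_no_closer_point: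
  assumes opt: "optimal_n_means P n A" and "p \<in> A" "q \<in> J1 \<union> J2" "q \<noteq> p"
    and closer: "\<And>x. x \<in> J1 \<union> J2 \<Longrightarrow> \<bar>x - q\<bar> \<le> \<bar>x - p\<bar>"
  shows False
proof -
  have A: "finite A" "A \<noteq> {}" "card A = n"
    using opt optimal_n_means_P_card[OF opt] by (auto simp: optimal_n_means_def)
  define B where "B = insert q (A - {p})"
  have B: "finite B" "B \<noteq> {}"
    using A by (auto simp: B_def)
  have B_closer: "infdist x B \<le> infdist x A" if "x \<in> J1 \<union> J2" for x
  proof -
    obtain a where a: "a \<in> A" "infdist x A = dist x a"
      using infdist_attains_inf[of A x] A finite_imp_closed by blast
    show ?thesis
    proof (cases "a = p")
      case True
      then show ?thesis
        using infdist_le[of q B x] closer[OF that] a by (simp add: B_def dist_real_def)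
    next
      case False
      then show ?thesis
        using infdist_le[of a B x] a by (simp add: B_def)
    qed
  qed
  show False
  proof (cases "q \<in> A")
    case True
    then have "B = A - {p}"
      using assms(4) by (auto simp: B_def)
    then have "card B < n"
      using card_Diff1_less[OF A(1) assms(2)] A(3) by metis
    then have "distortion P A < distortion P B"
      using optimal_n_means_P_less[OF opt B] by simp
    moreover have "distortion P B \<le> distortion P A"
      using distortion_P_mono[OF A(1,2) B B_closer] .
    ultimately show False by simp
  next
    case False
    have less_q: "infdist q B < infdist q A"
      using infdist_pos_not_in_closed[OF finite_imp_closed[OF A(1)] A(2) False] assms(4)
      by (simp add: B_def)
    have "distortion P B < distortion P A"
      using distortion_P_less[OF A(1,2) B B_closer assms(3) less_q] .
    moreover have "card B \<le> n"
      using A assms(2) card_gt_0_iff[of A] by (simp add: B_def card_insert_if)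
    then have "distortion P A \<le> distortion P B"
      using optimal_n_means_le[OF opt B] by simp
    ultimately show False by simp
  qed
qed

lemma optimal_n_means_P_subset:
  assumes "optimal_n_means P n A"
  shows "A \<subseteq> {0..1}"
proof
  fix p assume p: "p \<in> A"
  show "p \<in> {0..1}"
  proof (rule ccontr)
    assume "p \<notin> {0..1}"
    then consider "p < 0" | "1 < p" by fastforce
    then show False
    proof cases
      case 1
      show False
        by (rule optimal_n_means_P_no_closer_point[OF assms p, of 0])
          (use 1 in \<open>auto simp: J1_def J2_def\<close>)
    next
      case 2
      show False
        by (rule optimal_n_means_P_no_closer_point[OF assms p, of 1])
          (use 2 in \<open>auto simp: J1_def J2_def\<close>)
    qed
  qed
qed

section \<open>Optimal sets of two means\<close>

lemma quadratic_argmin: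
  fixes p q a :: real
  assumes "0 < p" "\<And>s. p * a\<^sup>2 - q * a \<le> p * s\<^sup>2 - q * s"
  shows "2 * p * a = q"
proof -
  have "p * a\<^sup>2 - q * a \<le> p * (q / (2 * p))\<^sup>2 - q * (q / (2 * p))"
    by (rule assms(2))
  also have "\<dots> = - q\<^sup>2 / (4 * p)"
    using assms(1) by (simp add: power2_eq_square field_simps)
  finally have "(2 * p * a - q)\<^sup>2 \<le> 0"
    using assms(1) by (simp add: power2_eq_square field_simps)
  then show ?thesis
    by simp
qed

text \<open>The distortion that \<open>{s, t}\<close> would have if the boundary between the two cells were at \<open>m\<close>
  instead of at the midpoint \<open>(s + t) / 2\<close>.\<close>

definition split_cost :: "real \<Rightarrow> real \<Rightarrow> real \<Rightarrow> real" where
  "split_cost m s t =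
     3/2 * (integral {0..max 0 (min (1/2) m)} (\<lambda>x. (x - s)\<^sup>2)
       + integral {max 0 (min (1/2) m)..1/2} (\<lambda>x. (x - t)\<^sup>2))
     + integral {3/4..max (3/4) (min 1 m)} (\<lambda>x. (x - s)\<^sup>2)
     + integral {max (3/4) (min 1 m)..1} (\<lambda>x. (x - t)\<^sup>2)"

lemma distortion_P_pair_le: "distortion P {s, t} \<le> split_cost m s t"
proof -
  have "integral J1 (\<lambda>x. infdist x {s, t} ^ 2)
      \<le> integral {0..max 0 (min (1/2) m)} (\<lambda>x. (x - s)\<^sup>2)
        + integral {max 0 (min (1/2) m)..1/2} (\<lambda>x. (x - t)\<^sup>2)"
    unfolding J1_def by (rule integral_infdist_pair_le) auto
  moreover have "integral J2 (\<lambda>x. infdist x {s, t} ^ 2)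
      \<le> integral {3/4..max (3/4) (min 1 m)} (\<lambda>x. (x - s)\<^sup>2)
        + integral {max (3/4) (min 1 m)..1} (\<lambda>x. (x - t)\<^sup>2)"
    unfolding J2_def by (rule integral_infdist_pair_le) auto
  moreover have "distortion P {s, t}
      = 3/2 * integral J1 (\<lambda>x. infdist x {s, t} ^ 2) + integral J2 (\<lambda>x. infdist x {s, t} ^ 2)"
    by (rule distortion_P) auto
  ultimately show ?thesis
    unfolding split_cost_def distrib_left by linarith
qed

lemma distortion_P_pair_eq:
  assumes "s < t"
  shows "distortion P {s, t} = split_cost ((s + t) / 2) s t"
  using integral_infdist_pair_eq[OF assms, of 0 "1/2"]
    integral_infdist_pair_eq[OF assms, of "3/4" 1]
  unfolding split_cost_def by (subst distortion_P) (auto simp: J1_def J2_def)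

lemma split_cost_argmin:
  assumes "0 < m" "m < 1" "\<And>s t. split_cost m a b \<le> split_cost m s t"
  defines "w\<^sub>1 \<equiv> max 0 (min (1/2) m)" and "w\<^sub>2 \<equiv> max (3/4) (min 1 m)"
  shows "(3 * w\<^sub>1 + 2 * w\<^sub>2 - 3/2) * a = 3/2 * w\<^sub>1\<^sup>2 + w\<^sub>2\<^sup>2 - 9/16"
    and "(7/2 - 3 * w\<^sub>1 - 2 * w\<^sub>2) * b = 11/8 - 3/2 * w\<^sub>1\<^sup>2 - w\<^sub>2\<^sup>2"
proof -
  have w: "0 < w\<^sub>1" "w\<^sub>1 \<le> 1/2" "3/4 \<le> w\<^sub>2" "w\<^sub>2 \<le> 1" "w\<^sub>1 < 1/2 \<or> w\<^sub>2 < 1"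
    using assms(1,2) by (auto simp: w\<^sub>1_def w\<^sub>2_def)
  define L where "L s = (3/2 * w\<^sub>1 + w\<^sub>2 - 3/4) * s\<^sup>2 - (3/2 * w\<^sub>1\<^sup>2 + w\<^sub>2\<^sup>2 - 9/16) * s" for s
  define R where "R t = (7/4 - 3/2 * w\<^sub>1 - w\<^sub>2) * t\<^sup>2 - (11/8 - 3/2 * w\<^sub>1\<^sup>2 - w\<^sub>2\<^sup>2) * t" for t
  \<comment> \<open>\<open>49/192\<close> is the second moment of \<open>P\<close>, whatever the split point.\<close>
  have expand: "split_cost m s t = L s + R t + 49/192" for s t
    unfolding split_cost_def w\<^sub>1_def[symmetric] w\<^sub>2_def[symmetric] L_def R_def
    using w
    by (simp add: integral_power2_diff) (simp add: power2_eq_square power3_eq_cube field_simps)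
  have "L a \<le> L s" for s
    using assms(3)[of s b] expand[of a b] expand[of s b] by simp
  then have "2 * (3/2 * w\<^sub>1 + w\<^sub>2 - 3/4) * a = 3/2 * w\<^sub>1\<^sup>2 + w\<^sub>2\<^sup>2 - 9/16"
    using w by (intro quadratic_argmin) (auto simp: L_def)
  then show "(3 * w\<^sub>1 + 2 * w\<^sub>2 - 3/2) * a = 3/2 * w\<^sub>1\<^sup>2 + w\<^sub>2\<^sup>2 - 9/16"
    by (simp add: algebra_simps)
  have "R b \<le> R t" for t
    using assms(3)[of a t] expand[of a b] expand[of a t] by simp
  then have "2 * (7/4 - 3/2 * w\<^sub>1 - w\<^sub>2) * b = 11/8 - 3/2 * w\<^sub>1\<^sup>2 - w\<^sub>2\<^sup>2"
    using w by (intro quadratic_argmin) (auto simp: R_def)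
  then show "(7/2 - 3 * w\<^sub>1 - 2 * w\<^sub>2) * b = 11/8 - 3/2 * w\<^sub>1\<^sup>2 - w\<^sub>2\<^sup>2"
    by (simp add: algebra_simps)
qed

lemma optimal_2_means_P:
  assumes "optimal_n_means P 2 A"
  shows "A = {1/4, 7/8}"
proof -
  obtain x y where "A = {x, y}" "x \<noteq> y"
    using optimal_n_means_P_card[OF assms] by (auto simp: card_2_iff)
  then obtain a b where A: "A = {a, b}" "a < b"
    by (metis insert_commute linorder_neqE_linordered_idom)
  define m where "m = (a + b) / 2"
  have m: "0 < m" "m < 1"
    using optimal_n_means_P_subset[OF assms] A by (auto simp: m_def)
  have "split_cost m a b \<le> split_cost m s t" for s t
  proof -
    have "split_cost m a b = distortion P A"
      using distortion_P_pair_eq[OF A(2)] A(1) by (simp add: m_def)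
    also have "\<dots> \<le> distortion P {s, t}"
      by (rule optimal_n_means_le[OF assms]) (auto simp: card_insert_if)
    also have "\<dots> \<le> split_cost m s t"
      by (rule distortion_P_pair_le)
    finally show ?thesis .
  qed
  note centroid = split_cost_argmin[OF m this]
  have b: "b = 2 * m - a"
    by (simp add: m_def field_simps)
  consider "m \<le> 1/2" | "1/2 \<le> m" "m \<le> 3/4" | "3/4 \<le> m"
    by linarith
  then show ?thesis
  proof cases
    case 1
    then have "max 0 (min (1/2) m) = m" "max (3/4) (min 1 m) = 3/4"
      using m by auto
    note centroid = centroid[unfolded this]
    have "m * (2 * a - m) = 0"
      using centroid(1) by (simp add: power2_eq_square algebra_simps)
    then have "a = m / 2"
      using m by simp
    then have b': "b = 3/2 * m"
      using b by simp
    have "48 * (m - 1/2)\<^sup>2 + 1 = 0"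
      using centroid(2) unfolding b' by (simp add: power2_eq_square field_simps)
    then show ?thesis
      using zero_le_power2[of "m - 1/2"] by linarith
  next
    case 2
    then have w: "max 0 (min (1/2) m) = 1/2" "max (3/4) (min 1 m) = 3/4"
      by auto
    have "a = 1/4" "b = 7/8"
      using centroid[unfolded w] by (simp_all add: power2_eq_square)
    then show ?thesis
      unfolding A(1) by (simp only:)
  next
    case 3
    then have "max 0 (min (1/2) m) = 1/2" "max (3/4) (min 1 m) = m"
      using m by auto
    note centroid = centroid[unfolded this]
    have "(1 - m) * (2 * b - (1 + m)) = 0"
      using centroid(2) by (simp add: power2_eq_square algebra_simps)
    then have "b = (1 + m) / 2"
      using m by simp
    then have a: "a = (3 * m - 1) / 2"
      using b by simp
    have "2 * (m - 1/4)\<^sup>2 + 1/16 = 0"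
      using centroid(1) unfolding a by (simp add: power2_eq_square field_simps)
    then show ?thesis
      using zero_le_power2[of "m - 1/4"] by linarith
  qed
qed

section \<open>Optimal sets of at least three means\<close>

lemma distortion_P_three_points_le: "distortion P {1/8, 3/8, 7/8} \<le> 1/192"
proof -
  let ?A = "{1/8, 3/8, 7/8 :: real}"
  let ?f = "\<lambda>x. infdist x ?A ^ 2"
  have "integral {0..1/4} ?f \<le> integral {0..1/4} (\<lambda>x. (x - 1/8)\<^sup>2)"
    by (rule integral_infdist_power2_le) simp
  then have left: "integral {0..1/4} ?f \<le> 1/768"
    by (simp add: integral_power2_diff power3_eq_cube)
  have "integral {1/4..1/2} ?f \<le> integral {1/4..1/2} (\<lambda>x. (x - 3/8)\<^sup>2)"
    by (rule integral_infdist_power2_le) simp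
  then have middle: "integral {1/4..1/2} ?f \<le> 1/768"
    by (simp add: integral_power2_diff power3_eq_cube)
  have "integral J2 ?f \<le> integral {3/4..1} (\<lambda>x. (x - 7/8)\<^sup>2)"
    unfolding J2_def by (rule integral_infdist_power2_le) simp
  then have right: "integral J2 ?f \<le> 1/768"
    by (simp add: integral_power2_diff power3_eq_cube)
  have "integral J1 ?f = integral {0..1/4} ?f + integral {1/4..1/2} ?f"
    unfolding J1_def
    by (rule Henstock_Kurzweil_Integration.integral_combine[symmetric])
      (auto intro: integrable_infdist_power2)
  moreover have "distortion P ?A = 3/2 * integral J1 ?f + integral J2 ?f"
    by (rule distortion_P) auto
  ultimately show ?thesis
    using left middle right by linarith
qed

lemma optimal_n_means_P_distortion_le:
  assumes "optimal_n_means P n A" "3 \<le> n"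
  shows "distortion P A \<le> 1/192"
  using optimal_n_means_le[OF assms(1), of "{1/8, 3/8, 7/8}"] assms(2) distortion_P_three_points_le
  by simp

lemma distortion_P_ge_if_J1_disjoint:
  assumes "finite A" "A \<noteq> {}" "A \<subseteq> {0..1}" "A \<inter> J1 = {}"
  shows "1/16 \<le> distortion P A"
proof -
  have "b \<notin> {-1/2<..<1/2}" if "b \<in> A" for b
    using subsetD[OF assms(3) that] assms(4) that by (auto simp: J1_def)
  then have gap: "A \<inter> {-1/2<..<1/2} = {}"
    by blast
  have "\<bar>x - 1/2\<bar> \<le> infdist x A" if "x \<in> J1" for x
    using infdist_ge_of_gap[OF assms(2) gap, of x] that by (auto simp: J1_def)
  then have "integral J1 (\<lambda>x. (x - 1/2)\<^sup>2) \<le> integral J1 (\<lambda>x. infdist x A ^ 2)"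
    unfolding J1_def by (intro integral_infdist_power2_ge) (simp add: J1_def)
  moreover have "0 \<le> integral J2 (\<lambda>x. infdist x A ^ 2)"
    unfolding J2_def by (intro integral_nonneg integrable_infdist_power2) simp
  moreover have "integral J1 (\<lambda>x. (x - 1/2)\<^sup>2) = 1/24"
    by (simp add: J1_def integral_power2_diff power3_eq_cube)
  ultimately show ?thesis
    unfolding distortion_P[OF assms(1,2)] by linarith
qed

lemma distortion_P_gt_if_J2_disjoint:
  assumes "finite A" "A \<noteq> {}" "A \<subseteq> {0..1}" "A \<inter> J2 = {}"
  shows "1/192 < distortion P A"
proof -
  have "b \<notin> {3/4<..<5/4}" if "b \<in> A" for b
    using subsetD[OF assms(3) that] assms(4) that by (auto simp: J2_def)
  then have gap: "A \<inter> {3/4<..<5/4} = {}"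
    by blast
  have "\<bar>x - 3/4\<bar> \<le> infdist x A" if "x \<in> J2" for x
    using infdist_ge_of_gap[OF assms(2) gap, of x] that by (auto simp: J2_def)
  then have "integral J2 (\<lambda>x. (x - 3/4)\<^sup>2) \<le> integral J2 (\<lambda>x. infdist x A ^ 2)"
    unfolding J2_def by (intro integral_infdist_power2_ge) (simp add: J2_def)
  moreover have "0 < integral J1 (\<lambda>x. infdist x A ^ 2)"
    unfolding J1_def by (rule integral_infdist_power2_pos[OF assms(1,2)]) simp
  moreover have "integral J2 (\<lambda>x. (x - 3/4)\<^sup>2) = 1/192"
    by (simp add: J2_def integral_power2_diff power3_eq_cube)
  ultimately show ?thesis
    unfolding distortion_P[OF assms(1,2)] by linarith
qed

lemma distortion_P_gt_if_voronoi_J1_meets_J2: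
  assumes "finite A" "a \<in> A \<inter> J1" "y \<in> voronoi A a \<inter> J2"
  shows "1/192 < distortion P A"
proof -
  have ne: "A \<noteq> {}"
    using assms(2) by auto
  have "b \<notin> {1/2<..<1}" if "b \<in> A" for b
  proof
    assume "b \<in> {1/2<..<1}"
    then have "\<bar>y - b\<bar> < \<bar>y - a\<bar>"
      using assms(2,3) by (auto simp: J1_def J2_def abs_if)
    then show False
      using voronoi_dist_le[OF assms(1) _ that] assms(3) by fastforce
  qed
  then have gap: "A \<inter> {1/2<..<1} = {}"
    by blast
  have "\<bar>x - 1\<bar> \<le> infdist x A" if "x \<in> J2" for x
    using infdist_ge_of_gap[OF ne gap, of x] that by (auto simp: J2_def)
  then have "integral J2 (\<lambda>x. (x - 1)\<^sup>2) \<le> integral J2 (\<lambda>x. infdist x A ^ 2)"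
    unfolding J2_def by (intro integral_infdist_power2_ge) (simp add: J2_def)
  moreover have "0 < integral J1 (\<lambda>x. infdist x A ^ 2)"
    unfolding J1_def by (rule integral_infdist_power2_pos[OF assms(1) ne]) simp
  moreover have "integral J2 (\<lambda>x. (x - 1)\<^sup>2) = 1/192"
    by (simp add: J2_def integral_power2_diff power3_eq_cube)
  ultimately show ?thesis
    unfolding distortion_P[OF assms(1) ne] by linarith
qed

lemma distortion_P_ge_if_voronoi_J2_meets_J1:
  assumes "finite A" "a \<in> A \<inter> J2" "y \<in> voronoi A a \<inter> J1"
  shows "1/128 \<le> distortion P A"
proof -
  have ne: "A \<noteq> {}"
    using assms(2) by auto
  have "b \<notin> {1/4<..<3/4}" if "b \<in> A" for b
  proof
    assume "b \<in> {1/4<..<3/4}"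
    then have "\<bar>y - b\<bar> < \<bar>y - a\<bar>"
      using assms(2,3) by (auto simp: J1_def J2_def abs_if)
    then show False
      using voronoi_dist_le[OF assms(1) _ that] assms(3) by fastforce
  qed
  then have gap: "A \<inter> {1/4<..<3/4} = {}"
    by blast
  let ?f = "\<lambda>x. infdist x A ^ 2"
  have "\<bar>x - 1/4\<bar> \<le> infdist x A" if "x \<in> {1/4..1/2}" for x
    using infdist_ge_of_gap[OF ne gap, of x] that by auto
  then have "integral {1/4..1/2} (\<lambda>x. (x - 1/4)\<^sup>2) \<le> integral {1/4..1/2} ?f"
    by (rule integral_infdist_power2_ge)
  moreover have "integral J1 ?f = integral {0..1/4} ?f + integral {1/4..1/2} ?f"
    unfolding J1_def
    by (rule Henstock_Kurzweil_Integration.integral_combine[symmetric])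
      (auto intro: integrable_infdist_power2)
  moreover have "0 \<le> integral {0..1/4} ?f" "0 \<le> integral J2 ?f"
    unfolding J2_def by (intro integral_nonneg integrable_infdist_power2; simp)+
  moreover have "integral {1/4..1/2} (\<lambda>x::real. (x - 1/4)\<^sup>2) = 1/192"
    by (simp add: integral_power2_diff power3_eq_cube)
  ultimately show ?thesis
    unfolding distortion_P[OF assms(1) ne] by linarith
qed

theorem proposition3p7:
  fixes n :: nat and \<alpha> :: "real set"
  assumes "n \<ge> 2" and "optimal_n_means P n \<alpha>"
  shows "\<alpha> \<inter> J1 \<noteq> {} \<and> \<alpha> \<inter> J2 \<noteq> {}
    \<and> (\<forall>a \<in> \<alpha> \<inter> J1. voronoi \<alpha> a \<inter> J2 = {})
    \<and> (\<forall>a \<in> \<alpha> \<inter> J2. voronoi \<alpha> a \<inter> J1 = {})"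
proof (cases "n = 2")
  case True
  then have "\<alpha> = {1/4, 7/8}"
    using optimal_2_means_P assms(2) by simp
  then show ?thesis
    using voronoi_pair[of "1/4" "7/8"] by (auto simp: J1_def J2_def)
next
  case False
  have \<alpha>: "finite \<alpha>" "\<alpha> \<noteq> {}" "\<alpha> \<subseteq> {0..1}"
    using assms(2) optimal_n_means_P_subset[OF assms(2)] by (auto simp: optimal_n_means_def)
  have small: "distortion P \<alpha> \<le> 1/192"
    using optimal_n_means_P_distortion_le[OF assms(2)] assms(1) False by simp
  show ?thesis
    using small distortion_P_ge_if_J1_disjoint[OF \<alpha>] distortion_P_gt_if_J2_disjoint[OF \<alpha>]
      distortion_P_gt_if_voronoi_J1_meets_J2[OF \<alpha>(1)]
      distortion_P_ge_if_voronoi_J2_meets_J1[OF \<alpha>(1)]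
    by fastforce
qed

end
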